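(* Consider the system and safe set $\mathcal{C}=\{x: h(x)\ge 0\}$ described in the context. Suppose that: (i) Assumptions A, B$'$ and C$'$ (see context) hold; (ii) there exist positive constants $\gamma,\epsilon_1,\epsilon_2,\gamma_\theta,\gamma_\lambda>0$ such that for every $x\in\mathcal{C}$ the set $$K_{BF}^g(x)=\{\mathfrak{u}\in\mathbb{R}:\Psi_0(x)+\Psi_1(x)\mathfrak{u}\geq0\}$$ is non-empty, where $\Psi_0=\mathcal{M}+h_{x_2}f_\theta^0-(\epsilon_1+\epsilon_2)+\gamma\big(h-\frac{\bar\mu^2}{2\gamma_\theta}-\frac{\bar\nu^2}{2\gamma_\lambda}\big)$ and $\Psi_1=h_{x_2}(g+g_\lambda^0)h_{x_2}^\top$; (iii) the scalar estimates $\hat\mu,\hat\nu$ evolve according to $$\dot{\hat\mu}=-\gamma\hat\mu+\gamma_\theta\|h_{x_2}\|\|\Omega_\varphi\|,\qquad \dot{\hat\nu}=-\gamma\hat\nu+\gamma_\lambda\|h_{x_2}\|^2|u_0|\|\Omega_\psi\|,$$ with $\hat\mu(0)>0$, $\hat\nu(0)>0$, where $u_0\in\mathbb{R}$ is a Lipschitz function satisfying $u_0\in K_{BF}^g(x)$; (iv) $h(x(0))\geq\frac{\hat\mu(0)^2+\bar\mu^2}{2\gamma_\theta}+\frac{\hat\nu(0)^2+\bar\nu^2}{2\gamma_\lambda}$. Then the control input $u=s_g(u_0)h_{x_2}^\top\in\mathbb{R}^n$, where $$s_g(u_0)=u_0+\frac{\kappa_{1,g}}{b^*}+\frac{\kappa_{2,g}^2u_0^2}{b^*(\kappa_{2,g}\|h_{x_2}\||u_0|+\epsilon_2)},\quad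 \kappa_{1,g}=\frac{\hat\mu^2\|\Omega_\varphi\|^2}{\hat\mu\|\Omega_\varphi\|\|h_{x_2}\|+\epsilon_1},\quad\kappa_{2,g}=\hat\nu\|\Omega_\psi\|\|h_{x_2}\|,$$ ensures $h(x(t))\geq0$ for all $t>0$ along the closed-loop trajectory.
   Context: Let $m\ge0$, $n\ge1$, $[n]=\{1,\dots,n\}$, state $x=(x_1,x_2)\in\mathbb{R}^{m+n}$ ($x_2\in\mathbb{R}^n$), input $u\in\mathbb{R}^n$, system $$\dot x=f(x)+f_u(x)+\begin{pmatrix}0_m\\ f_\theta(x)\end{pmatrix}+\begin{pmatrix}0_{m\times n}\\ g(x)+g_\lambda(x)\end{pmatrix}u,$$ with $f$ known Lipschitz, $f_u$ unknown Lipschitz (both $\mathbb{R}^{m+n}\to\mathbb{R}^{m+n}$), $f_\theta(x)=[\theta_1^\top\varphi_1(x),\dots,\theta_n^\top\varphi_n(x)]^\top$ with known $\varphi_i:\mathbb{R}^{m+n}\to\mathbb{R}^{p_i}$ and unknown $\theta_i\in\mathbb{R}^{p_i}$; $g,g_\lambda$ are $n\times n$ matrices (not necessarily diagonal) with entries $(g)_{ij}=g_{ij}(x)$, $(g_\lambda)_{ij}=\lambda_{ij}^\top\psi_{ij}(x)$, with known $g_{ij}:\mathbb{R}^{m+n}\to\mathbb{R}$, $\psi_{ij}:\mathbb{R}^{m+n}\to\mathbb{R}^{q_{ij}}$ and unknown $\lambda_{ij}\in\mathbb{R}^{q_{ij}}$. $h:\mathbb{R}^{m+n}\to\mathbb{R}$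 is continuously differentiable, $h_x=\partial h/\partial x$, $h_{x_2}=\partial h/\partial x_2$ are row vectors with entries $h_{x,j}$. Norms: Euclidean for vectors. Vector inequalities are entrywise. Assumption A: known $\underline f_u,\overline f_u$ with $\underline f_u(x)\le f_u(x)\le\overline f_u(x)$ for all $x$ (entries $\underline f_{u,j},\overline f_{u,j}$). Assumption B$'$: known vectors with $\underline\theta_i\le\theta_i\le\overline\theta_i$ and $\underline\lambda_{ij}\le\lambda_{ij}\le\overline\lambda_{ij}$ for all $i,j\in[n]$. Assumption C$'$: with $\tilde g=g+g_\lambda$, there is a compact set $\mathcal{X}\supset\mathcal{C}$ and a constant $b^*>0$ such that for all $x\in\mathcal{X}$ the matrix $\frac{\tilde g(x)+\tilde g(x)^\top}{2}$ is positive definite with smallest singular value at least $b^*$. Fix nominal values $\theta_i^0\in[\underline\theta_i,\overline\theta_i]$, $\lambda_{ij}^0\in[\underline\lambda_{ij},\overline\lambda_{ij}]$ (entrywise). Let $\Theta=[\theta_1^\top,\dots,\theta_n^\top]^\top$, $\Theta^0=[\theta_1^{0\top},\dots,\theta_n^{0\top}]^\top$, $\Lambda=[\lambda_{11}^\top,\lambda_{12}^\top,\dots,\lambda_{nn}^\top]^\top$, $\Lambda^0$ analogously, $\Omega_\varphi=[\varphi_1^\top,\dots,\varphi_n^\top]^\top$, $\Omega_\psi=[\psi_{11}^\top,\psi_{12}^\top,\dots,\psi_{nn}^\top]^\top$, $f_\theta^0=[\theta_1^{0\top}\varphi_1,\dots,\theta_n^{0\top}\varphi_n]^\top$, and $g_\lambda^0$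 the $n\times n$ matrix with entries $\lambda_{ij}^{0\top}\psi_{ij}$. With $\overline\Theta,\underline\Theta,\overline\Lambda,\underline\Lambda$ the correspondingly stacked bound vectors, $M=\sum_i p_i$, $N=\sum_{i,j}q_{ij}$, set $\bar\mu=\sqrt{\sum_{j=1}^M\max\{(\overline\Theta_j-\Theta^0_j)^2,(\underline\Theta_j-\Theta^0_j)^2\}}$, $\bar\nu=\sqrt{\sum_{j=1}^N\max\{(\overline\Lambda_j-\Lambda^0_j)^2,(\underline\Lambda_j-\Lambda^0_j)^2\}}$. Define $\mathcal{M}(x)=h_x f+\sum_{j=1}^{m+n}\min\{h_{x,j}\underline f_{u,j},h_{x,j}\overline f_{u,j}\}$. *)

theory Defs
  imports "HOL-Analysis.Analysis"
begin

text \<open>State space: real^'s; the x2-block (dimension n = CARD('n)) is the set of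
  coordinates selected by an injective map iota :: 'n => 's; the remaining
  CARD('s) - CARD('n) >= 0 coordinates form x1 (so m = 0 is allowed).\<close>

definition emb :: "('n::finite \<Rightarrow> 's::finite) \<Rightarrow> real^'n \<Rightarrow> real^'s" where
  "emb iota v = (\<Sum>i\<in>UNIV. (v $ i) *\<^sub>R axis (iota i) 1)"

definition proj2 :: "('n::finite \<Rightarrow> 's::finite) \<Rightarrow> real^'s \<Rightarrow> real^'n" where
  "proj2 iota w = (\<chi> i. w $ iota i)"

definition lin_param ::
  "('n::finite \<Rightarrow> nat) \<Rightarrow> ('n \<Rightarrow> nat \<Rightarrow> real) \<Rightarrow> ('n \<Rightarrow> 'x \<Rightarrow> nat \<Rightarrow> real) \<Rightarrow> 'x \<Rightarrow> real^'n" where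
  "lin_param p th phi x = (\<chi> i. \<Sum>j<p i. th i j * phi i x j)"

definition mat_param ::
  "('n::finite \<Rightarrow> 'n \<Rightarrow> nat) \<Rightarrow> ('n \<Rightarrow> 'n \<Rightarrow> nat \<Rightarrow> real) \<Rightarrow> ('n \<Rightarrow> 'n \<Rightarrow> 'x \<Rightarrow> nat \<Rightarrow> real)
     \<Rightarrow> 'x \<Rightarrow> real^'n^'n" where
  "mat_param q lam psi x = (\<chi> i j. \<Sum>k<q i j. lam i j k * psi i j x k)"

definition norm_stack1 :: "('n::finite \<Rightarrow> nat) \<Rightarrow> ('n \<Rightarrow> 'x \<Rightarrow> nat \<Rightarrow> real) \<Rightarrow> 'x \<Rightarrow> real" where
  "norm_stack1 p phi x = sqrt (\<Sum>i\<in>UNIV. \<Sum>j<p i. (phi i x j)\<^sup>2)"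

definition norm_stack2 ::
  "('n::finite \<Rightarrow> 'n \<Rightarrow> nat) \<Rightarrow> ('n \<Rightarrow> 'n \<Rightarrow> 'x \<Rightarrow> nat \<Rightarrow> real) \<Rightarrow> 'x \<Rightarrow> real" where
  "norm_stack2 q psi x = sqrt (\<Sum>i\<in>UNIV. \<Sum>j\<in>UNIV. \<Sum>k<q i j. (psi i j x k)\<^sup>2)"

definition radius1 :: "('n::finite \<Rightarrow> nat) \<Rightarrow> ('n \<Rightarrow> nat \<Rightarrow> real) \<Rightarrow> ('n \<Rightarrow> nat \<Rightarrow> real) \<Rightarrow> ('n \<Rightarrow> nat \<Rightarrow> real) \<Rightarrow> real" where
  "radius1 p lo hi th0 = sqrt (\<Sum>i\<in>UNIV. \<Sum>j<p i. max ((hi i j - th0 i j)\<^sup>2) ((lo i j - th0 i j)\<^sup>2))"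

definition radius2 ::
  "('n::finite \<Rightarrow> 'n \<Rightarrow> nat) \<Rightarrow> ('n \<Rightarrow> 'n \<Rightarrow> nat \<Rightarrow> real) \<Rightarrow> ('n \<Rightarrow> 'n \<Rightarrow> nat \<Rightarrow> real)
     \<Rightarrow> ('n \<Rightarrow> 'n \<Rightarrow> nat \<Rightarrow> real) \<Rightarrow> real" where
  "radius2 q lo hi l0 = sqrt (\<Sum>i\<in>UNIV. \<Sum>j\<in>UNIV. \<Sum>k<q i j. max ((hi i j k - l0 i j k)\<^sup>2) ((lo i j k - l0 i j k)\<^sup>2))"

definition pos_def_mat :: "real^'n^'n \<Rightarrow> bool" where
  "pos_def_mat A \<longleftrightarrow> (\<forall>v. v \<noteq> 0 \<longrightarrow> v \<bullet> (A *v v) > 0)"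

definition smallest_sv :: "real^'n^'n \<Rightarrow> real" where
  "smallest_sv A = Inf {norm (A *v v) | v. norm v = 1}"

definition Mfun :: "(real^'s \<Rightarrow> real^'s) \<Rightarrow> (real^'s \<Rightarrow> real^'s) \<Rightarrow> (real^'s \<Rightarrow> real^'s)
    \<Rightarrow> (real^'s \<Rightarrow> real^'s) \<Rightarrow> real^'s \<Rightarrow> real" where
  "Mfun Dh f fulo fuhi x = Dh x \<bullet> f x
     + (\<Sum>j\<in>UNIV. min (Dh x $ j * fulo x $ j) (Dh x $ j * fuhi x $ j))"

end

theory Submission
  imports Defs
begin

text \<open>With the estimation radii mb and nb, the adaptive barrier
  B = h - (muh - mb)^2 / (2 gth) - (nuh - nb)^2 / (2 glam)
  satisfies B' > - gam B wherever h >= 0. Along the closed loop, u0 in K_BF^g handles the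
  nominal part of the Lie derivative of h. The parametric errors are bounded by Cauchy-Schwarz
  against mb and nb; the robustifying terms of s_g, amplified by bstar through the symmetric
  part of g + g_lambda, dominate them up to eps1 + eps2 because z^2 / (z + e) >= z - e. The
  estimator dynamics cancel the remaining cross terms and leave gam muh^2 / (2 gth) > 0, since
  muh stays positive. By (iv), B(0) >= 0, and a first-exit argument for exp(gam t) B(t) keeps
  B, hence h, nonnegative. The hypotheses left unused (Lipschitz continuity, compactness of X,
  injectivity of iota, continuity of Dh, non-emptiness of K_BF^g, T > 0) only serve the
  existence of the closed-loop trajectory, which is given here.\<close>

lemma quadratic_nonneg_imp_linear_coeff_zero:
  fixes a b :: real
  assumes "\<And>t. 0 \<le> a * t + b * t\<^sup>2"
  shows "a = 0"
proof (rule ccontr)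
  assume "a \<noteq> 0"
  define c where "c = \<bar>b\<bar> + 1"
  have "0 < c"
    by (simp add: c_def add_nonneg_pos)
  then have "a * (- a / c) + b * (- a / c)\<^sup>2 = (a / c)\<^sup>2 * (b - c)"
    by (simp add: field_simps power2_eq_square)
  also have "\<dots> < 0"
    using \<open>a \<noteq> 0\<close> by (intro mult_pos_neg) (auto simp: c_def)
  finally show False
    using assms[of "- a / c"] by simp
qed

lemma inner_matrix_vector_mult_symmetric:
  fixes S :: "real^'n^'n"
  assumes "transpose S = S"
  shows "x \<bullet> (S *v y) = y \<bullet> (S *v x)"
  by (metis assms dot_lmul_matrix inner_commute vector_transpose_matrix)

text \<open>Perturbing the minimiser \<open>v\<close> along the residual \<open>S v - m v\<close> keeps the form above
  \<open>m\<close> only if the residual vanishes.\<close>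
lemma symmetric_quadratic_form_minimiser_eigenvector:
  fixes S :: "real^'n^'n"
  assumes sym: "transpose S = S" and v: "norm v = 1"
    and min: "\<And>z. (v \<bullet> (S *v v)) * (norm z)\<^sup>2 \<le> z \<bullet> (S *v z)"
  shows "S *v v = (v \<bullet> (S *v v)) *\<^sub>R v"
proof -
  define m where "m = v \<bullet> (S *v v)"
  define w where "w = S *v v - m *\<^sub>R v"
  have vv: "v \<bullet> v = 1"
    using v by (simp add: dot_square_norm)
  then have vw: "v \<bullet> w = 0"
    by (simp add: w_def m_def inner_diff_right)
  have Svw: "w \<bullet> (S *v v) = w \<bullet> w"
    using vw by (simp add: w_def inner_diff_right inner_commute)
  have "0 \<le> (2 * (w \<bullet> w)) * t + (w \<bullet> (S *v w) - m * (w \<bullet> w)) * t\<^sup>2" for t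
  proof -
    have "S *v (v + t *\<^sub>R w) = S *v v + t *\<^sub>R (S *v w)"
      by (simp add: matrix_vector_right_distrib matrix_vector_mult_scaleR)
    then have "(v + t *\<^sub>R w) \<bullet> (S *v (v + t *\<^sub>R w))
        = m + 2 * t * (w \<bullet> (S *v v)) + t\<^sup>2 * (w \<bullet> (S *v w))"
      using inner_matrix_vector_mult_symmetric[OF sym, of v w]
      by (simp add: m_def inner_add_left inner_add_right algebra_simps power2_eq_square)
    moreover have "(norm (v + t *\<^sub>R w))\<^sup>2 = 1 + t\<^sup>2 * (w \<bullet> w)"
      using vv vw by (simp only: power2_norm_eq_inner)
        (simp add: inner_add_left inner_add_right inner_commute[of w v] power2_eq_square)
    ultimately show ?thesis
      using min[of "v + t *\<^sub>R w"] vw Svw by (simp add: m_def algebra_simps)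
  qed
  then have "2 * (w \<bullet> w) = 0"
    by (rule quadratic_nonneg_imp_linear_coeff_zero)
  then show ?thesis
    by (simp add: w_def m_def)
qed

lemma symmetric_pos_def_quadratic_form_ge:
  fixes S :: "real^'n^'n"
  assumes sym: "transpose S = S" and pd: "pos_def_mat S" and sv: "b \<le> smallest_sv S"
  shows "b * (norm z)\<^sup>2 \<le> z \<bullet> (S *v z)"
proof -
  let ?Q = "\<lambda>v. v \<bullet> (S *v v)"
  have "sphere (0::real^'n) 1 \<noteq> {}"
    by simp
  moreover have "continuous_on (sphere 0 1) ?Q"
    by (intro continuous_intros)
  ultimately obtain v where "v \<in> sphere 0 1" and vmin: "\<And>y. y \<in> sphere 0 1 \<Longrightarrow> ?Q v \<le> ?Q y"
    using continuous_attains_inf[OF compact_sphere] by blast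
  then have v: "norm v = 1"
    by simp
  define m where "m = ?Q v"
  have homog: "m * (norm z)\<^sup>2 \<le> ?Q z" for z
  proof (cases "z = 0")
    case False
    define u where "u = (1 / norm z) *\<^sub>R z"
    have "u \<in> sphere 0 1"
      using False by (simp add: u_def)
    then have "m \<le> ?Q u"
      unfolding m_def by (rule vmin)
    also have "?Q u = ?Q z / (norm z)\<^sup>2"
      by (simp add: u_def matrix_vector_mult_scaleR power2_eq_square)
    finally show ?thesis
      using False by (simp add: field_simps)
  qed simp
  have eig: "S *v v = m *\<^sub>R v"
    using symmetric_quadratic_form_minimiser_eigenvector[OF sym v] homog by (simp add: m_def)
  have "v \<noteq> 0"
    using v by auto
  then have "0 < m"
    using pd unfolding pos_def_mat_def m_def by blast
  have "smallest_sv S \<le> norm (S *v v)"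
    unfolding smallest_sv_def using v by (intro cInf_lower bdd_belowI[of _ 0]) auto
  also have "\<dots> = m"
    using eig v \<open>0 < m\<close> by simp
  finally have "b * (norm z)\<^sup>2 \<le> m * (norm z)\<^sup>2"
    using sv by (intro mult_right_mono) auto
  with homog[of z] show ?thesis
    by simp
qed

lemma quadratic_form_ge_symmetric_part:
  fixes G :: "real^'n^'n"
  defines "S \<equiv> (1/2) *\<^sub>R (G + transpose G)"
  assumes "pos_def_mat S" and "b \<le> smallest_sv S"
  shows "b * (norm a)\<^sup>2 \<le> a \<bullet> (G *v a)"
proof -
  have "transpose S = S"
    by (simp add: S_def transpose_def vec_eq_iff)
  moreover have "a \<bullet> (S *v a) = a \<bullet> (G *v a)"
    using dot_lmul_matrix[of a G a]
    by (simp add: S_def scaleR_matrix_vector_assoc[symmetric] matrix_vector_mult_add_rdistrib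
        inner_add_right inner_commute)
  ultimately show ?thesis
    using symmetric_pos_def_quadratic_form_ge assms by metis
qed

lemma abs_sum_mult_le_sqrt_sum_squares:
  fixes x y :: "'a \<Rightarrow> real"
  shows "\<bar>\<Sum>k\<in>A. x k * y k\<bar> \<le> sqrt (\<Sum>k\<in>A. (x k)\<^sup>2) * sqrt (\<Sum>k\<in>A. (y k)\<^sup>2)"
proof -
  have "\<bar>\<Sum>k\<in>A. x k * y k\<bar> \<le> (\<Sum>k\<in>A. \<bar>x k * y k\<bar>)"
    by (rule sum_abs)
  also have "\<dots> = (\<Sum>k\<in>A. \<bar>x k\<bar> * \<bar>y k\<bar>)"
    by (simp only: abs_mult)
  also have "\<dots> \<le> L2_set x A * L2_set y A"
    by (rule L2_set_mult_ineq)
  finally show ?thesis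
    unfolding L2_set_def by simp
qed

lemma abs_double_sum_mult_le_sqrt_sum_squares:
  fixes u v :: "'a \<Rightarrow> 'b \<Rightarrow> real"
  assumes "finite I" "\<And>i. finite (J i)"
  shows "\<bar>\<Sum>i\<in>I. \<Sum>j\<in>J i. u i j * v i j\<bar>
     \<le> sqrt (\<Sum>i\<in>I. \<Sum>j\<in>J i. (u i j)\<^sup>2) * sqrt (\<Sum>i\<in>I. \<Sum>j\<in>J i. (v i j)\<^sup>2)"
proof -
  have Sigma: "(\<Sum>i\<in>I. \<Sum>j\<in>J i. g i j) = (\<Sum>(i,j)\<in>(SIGMA i:I. J i). g i j)"
    for g :: "'a \<Rightarrow> 'b \<Rightarrow> real"
    using assms by (intro sum.Sigma) auto
  show ?thesis
    unfolding Sigma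
    using abs_sum_mult_le_sqrt_sum_squares[of "\<lambda>(i,j). u i j" "\<lambda>(i,j). v i j"]
    by (simp add: case_prod_unfold)
qed

lemma abs_triple_sum_mult_le_sqrt_sum_squares:
  fixes u v :: "'a \<Rightarrow> 'b \<Rightarrow> 'c \<Rightarrow> real"
  assumes "finite I" "\<And>i. finite (J i)" "\<And>i j. finite (K i j)"
  shows "\<bar>\<Sum>i\<in>I. \<Sum>j\<in>J i. \<Sum>k\<in>K i j. u i j k * v i j k\<bar>
     \<le> sqrt (\<Sum>i\<in>I. \<Sum>j\<in>J i. \<Sum>k\<in>K i j. (u i j k)\<^sup>2)
       * sqrt (\<Sum>i\<in>I. \<Sum>j\<in>J i. \<Sum>k\<in>K i j. (v i j k)\<^sup>2)"
proof -
  have Sigma: "(\<Sum>i\<in>I. \<Sum>j\<in>J i. \<Sum>k\<in>K i j. g i j k)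
      = (\<Sum>i\<in>I. \<Sum>(j,k)\<in>(SIGMA j:J i. K i j). g i j k)"
    for g :: "'a \<Rightarrow> 'b \<Rightarrow> 'c \<Rightarrow> real"
    using assms by (simp add: sum.Sigma)
  have "finite (SIGMA j:J i. K i j)" for i
    using assms by auto
  then show ?thesis
    unfolding Sigma
    using abs_double_sum_mult_le_sqrt_sum_squares[OF assms(1), of "\<lambda>i. SIGMA j:J i. K i j"
        "\<lambda>i (j,k). u i j k" "\<lambda>i (j,k). v i j k"]
    by (simp add: case_prod_unfold)
qed

lemma square_deviation_le_max:
  fixes lo hi th th0 :: real
  assumes "lo \<le> th" "th \<le> hi" "lo \<le> th0" "th0 \<le> hi"
  shows "(th - th0)\<^sup>2 \<le> max ((hi - th0)\<^sup>2) ((lo - th0)\<^sup>2)"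
proof (cases "th0 \<le> th")
  case True
  then have "(th - th0)\<^sup>2 \<le> (hi - th0)\<^sup>2"
    using assms by (intro power_mono) auto
  then show ?thesis by simp
next
  case False
  then have "(th0 - th)\<^sup>2 \<le> (th0 - lo)\<^sup>2"
    using assms by (intro power_mono) auto
  then show ?thesis by (simp add: power2_commute)
qed

lemma component_square_le_norm_square: "(a $ i)\<^sup>2 \<le> (norm (a::real^'n))\<^sup>2"
  by (metis component_le_norm_cart power2_abs power_mono abs_ge_zero)

lemma inner_emb: "d \<bullet> emb iota v = proj2 iota d \<bullet> v"
proof -
  have "d \<bullet> emb iota v = (\<Sum>i\<in>UNIV. v $ i * (d \<bullet> axis (iota i) 1))"
    unfolding emb_def by (simp add: inner_sum_right)
  also have "\<dots> = (\<Sum>i\<in>UNIV. v $ i * d $ iota i)"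
    by (simp add: inner_axis)
  also have "\<dots> = proj2 iota d \<bullet> v"
    unfolding proj2_def inner_vec_def by (simp add: mult.commute)
  finally show ?thesis .
qed

lemma Mfun_le_inner:
  assumes "\<And>j. fulo x $ j \<le> fu x $ j \<and> fu x $ j \<le> fuhi x $ j"
  shows "Mfun Dh f fulo fuhi x \<le> Dh x \<bullet> (f x + fu x)"
proof -
  have "min (Dh x $ j * fulo x $ j) (Dh x $ j * fuhi x $ j) \<le> Dh x $ j * fu x $ j" for j
    using assms[of j] by (cases "0 \<le> Dh x $ j")
      (auto intro: min.coboundedI1 min.coboundedI2 mult_left_mono mult_left_mono_neg)
  then have "(\<Sum>j\<in>UNIV. min (Dh x $ j * fulo x $ j) (Dh x $ j * fuhi x $ j))
      \<le> (\<Sum>j\<in>UNIV. Dh x $ j * fu x $ j)"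
    by (rule sum_mono)
  then show ?thesis
    unfolding Mfun_def by (simp add: inner_add_right inner_vec_def distrib_left sum.distrib)
qed

lemma norm_stack1_nonneg [simp]: "0 \<le> norm_stack1 p phi x"
  by (simp add: norm_stack1_def sum_nonneg)

lemma norm_stack2_nonneg [simp]: "0 \<le> norm_stack2 q psi x"
  by (simp add: norm_stack2_def sum_nonneg)

lemma radius1_nonneg [simp]: "0 \<le> radius1 p lo hi th0"
  by (simp add: radius1_def sum_nonneg le_max_iff_disj)

lemma radius2_nonneg [simp]: "0 \<le> radius2 q lo hi lam0"
  by (simp add: radius2_def sum_nonneg le_max_iff_disj)

lemma sqrt_sum_squares_deviation_le_radius1:
  assumes "\<And>i j. j < p i \<Longrightarrow> lo i j \<le> th i j \<and> th i j \<le> hi i j"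
    and "\<And>i j. j < p i \<Longrightarrow> lo i j \<le> th0 i j \<and> th0 i j \<le> hi i j"
  shows "sqrt (\<Sum>i\<in>UNIV. \<Sum>j<p i. (th i j - th0 i j)\<^sup>2) \<le> radius1 p lo hi th0"
  unfolding radius1_def
  by (intro real_sqrt_le_mono sum_mono square_deviation_le_max) (use assms in auto)

lemma sqrt_sum_squares_deviation_le_radius2:
  assumes "\<And>i j k. k < q i j \<Longrightarrow> lo i j k \<le> lam i j k \<and> lam i j k \<le> hi i j k"
    and "\<And>i j k. k < q i j \<Longrightarrow> lo i j k \<le> lam0 i j k \<and> lam0 i j k \<le> hi i j k"
  shows "sqrt (\<Sum>i\<in>UNIV. \<Sum>j\<in>UNIV. \<Sum>k<q i j. (lam i j k - lam0 i j k)\<^sup>2)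
    \<le> radius2 q lo hi lam0"
  unfolding radius2_def
  by (intro real_sqrt_le_mono sum_mono square_deviation_le_max) (use assms in auto)

lemma abs_inner_lin_param_diff_le:
  fixes a :: "real^'n"
  assumes "\<And>i j. j < p i \<Longrightarrow> lo i j \<le> th i j \<and> th i j \<le> hi i j"
    and "\<And>i j. j < p i \<Longrightarrow> lo i j \<le> th0 i j \<and> th0 i j \<le> hi i j"
  shows "\<bar>a \<bullet> lin_param p th phi x - a \<bullet> lin_param p th0 phi x\<bar>
    \<le> norm a * norm_stack1 p phi x * radius1 p lo hi th0"
proof -
  have "(\<Sum>i\<in>UNIV. \<Sum>j<p i. (a $ i * phi i x j)\<^sup>2)
      = (\<Sum>i\<in>UNIV. (a $ i)\<^sup>2 * (\<Sum>j<p i. (phi i x j)\<^sup>2))"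
    by (simp add: power_mult_distrib sum_distrib_left)
  also have "\<dots> \<le> (\<Sum>i\<in>UNIV. (norm a)\<^sup>2 * (\<Sum>j<p i. (phi i x j)\<^sup>2))"
    by (intro sum_mono mult_right_mono component_square_le_norm_square sum_nonneg) auto
  also have "\<dots> = (norm a)\<^sup>2 * (\<Sum>i\<in>UNIV. \<Sum>j<p i. (phi i x j)\<^sup>2)"
    by (simp add: sum_distrib_left)
  finally have "sqrt (\<Sum>i\<in>UNIV. \<Sum>j<p i. (a $ i * phi i x j)\<^sup>2)
      \<le> sqrt ((norm a)\<^sup>2 * (\<Sum>i\<in>UNIV. \<Sum>j<p i. (phi i x j)\<^sup>2))"
    by (rule real_sqrt_le_mono)
  also have "\<dots> = norm a * norm_stack1 p phi x"
    unfolding norm_stack1_def by (simp add: real_sqrt_mult)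
  finally have regressor: "sqrt (\<Sum>i\<in>UNIV. \<Sum>j<p i. (a $ i * phi i x j)\<^sup>2)
      \<le> norm a * norm_stack1 p phi x" .
  have "a \<bullet> lin_param p th phi x - a \<bullet> lin_param p th0 phi x
      = (\<Sum>i\<in>UNIV. \<Sum>j<p i. (a $ i * phi i x j) * (th i j - th0 i j))"
    unfolding lin_param_def inner_vec_def
    by (simp add: sum_distrib_left sum_subtractf right_diff_distrib mult_ac)
  also have "\<bar>\<dots>\<bar> \<le> sqrt (\<Sum>i\<in>UNIV. \<Sum>j<p i. (a $ i * phi i x j)\<^sup>2)
      * sqrt (\<Sum>i\<in>UNIV. \<Sum>j<p i. (th i j - th0 i j)\<^sup>2)"
    by (rule abs_double_sum_mult_le_sqrt_sum_squares) auto
  also have "\<dots> \<le> (norm a * norm_stack1 p phi x) * radius1 p lo hi th0"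
    using regressor sqrt_sum_squares_deviation_le_radius1[OF assms]
    by (rule mult_mono) (simp_all add: sum_nonneg)
  finally show ?thesis .
qed

lemma abs_quadratic_form_mat_param_diff_le:
  fixes a :: "real^'n"
  assumes "\<And>i j k. k < q i j \<Longrightarrow> lo i j k \<le> lam i j k \<and> lam i j k \<le> hi i j k"
    and "\<And>i j k. k < q i j \<Longrightarrow> lo i j k \<le> lam0 i j k \<and> lam0 i j k \<le> hi i j k"
  shows "\<bar>a \<bullet> (mat_param q lam psi x *v a) - a \<bullet> (mat_param q lam0 psi x *v a)\<bar>
    \<le> (norm a)\<^sup>2 * norm_stack2 q psi x * radius2 q lo hi lam0"
proof -
  have "(\<Sum>i\<in>UNIV. \<Sum>j\<in>UNIV. \<Sum>k<q i j. (a $ i * a $ j * psi i j x k)\<^sup>2)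
      = (\<Sum>i\<in>UNIV. \<Sum>j\<in>UNIV. ((a $ i)\<^sup>2 * (a $ j)\<^sup>2) * (\<Sum>k<q i j. (psi i j x k)\<^sup>2))"
    by (simp add: power_mult_distrib sum_distrib_left)
  also have "\<dots> \<le> (\<Sum>i\<in>UNIV. \<Sum>j\<in>UNIV. ((norm a)\<^sup>2 * (norm a)\<^sup>2) * (\<Sum>k<q i j. (psi i j x k)\<^sup>2))"
    by (intro sum_mono mult_right_mono mult_mono component_square_le_norm_square sum_nonneg) auto
  also have "\<dots> = ((norm a)\<^sup>2)\<^sup>2 * (\<Sum>i\<in>UNIV. \<Sum>j\<in>UNIV. \<Sum>k<q i j. (psi i j x k)\<^sup>2)"
    by (simp add: sum_distrib_left power2_eq_square)
  finally have "sqrt (\<Sum>i\<in>UNIV. \<Sum>j\<in>UNIV. \<Sum>k<q i j. (a $ i * a $ j * psi i j x k)\<^sup>2)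
      \<le> sqrt (((norm a)\<^sup>2)\<^sup>2 * (\<Sum>i\<in>UNIV. \<Sum>j\<in>UNIV. \<Sum>k<q i j. (psi i j x k)\<^sup>2))"
    by (rule real_sqrt_le_mono)
  also have "\<dots> = (norm a)\<^sup>2 * norm_stack2 q psi x"
    unfolding norm_stack2_def real_sqrt_mult real_sqrt_abs by simp
  finally have regressor: "sqrt (\<Sum>i\<in>UNIV. \<Sum>j\<in>UNIV. \<Sum>k<q i j. (a $ i * a $ j * psi i j x k)\<^sup>2)
      \<le> (norm a)\<^sup>2 * norm_stack2 q psi x" .
  have "a \<bullet> (mat_param q lam psi x *v a) - a \<bullet> (mat_param q lam0 psi x *v a)
      = (\<Sum>i\<in>UNIV. \<Sum>j\<in>UNIV. \<Sum>k<q i j. (a $ i * a $ j * psi i j x k) * (lam i j k - lam0 i j k))"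
    unfolding mat_param_def inner_vec_def matrix_vector_mult_def
    by (simp add: sum_distrib_left sum_distrib_right sum_subtractf right_diff_distrib mult_ac)
  also have "\<bar>\<dots>\<bar> \<le> sqrt (\<Sum>i\<in>UNIV. \<Sum>j\<in>UNIV. \<Sum>k<q i j. (a $ i * a $ j * psi i j x k)\<^sup>2)
      * sqrt (\<Sum>i\<in>UNIV. \<Sum>j\<in>UNIV. \<Sum>k<q i j. (lam i j k - lam0 i j k)\<^sup>2)"
    by (rule abs_triple_sum_mult_le_sqrt_sum_squares) auto
  also have "\<dots> \<le> ((norm a)\<^sup>2 * norm_stack2 q psi x) * radius2 q lo hi lam0"
    using regressor sqrt_sum_squares_deviation_le_radius2[OF assms]
    by (rule mult_mono) (simp_all add: sum_nonneg)
  finally show ?thesis .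
qed

lemma diff_le_square_div_add:
  fixes z e :: real
  assumes "0 \<le> z" "0 < e"
  shows "z - e \<le> z\<^sup>2 / (z + e)"
proof -
  have "(z - e) * (z + e) \<le> z\<^sup>2"
    by (simp add: algebra_simps power2_eq_square)
  then show ?thesis
    using assms by (simp add: le_divide_eq)
qed

text \<open>With P, Q, A the norms of Omega_phi, Omega_psi and h_x2, the local k1 and k2 are the
  paper's kappa_1g and kappa_2g, and s_g(u0) = u0 + robust_gain bstar eps1 eps2 muh nuh P Q A u0.\<close>
definition robust_gain :: "real \<Rightarrow> real \<Rightarrow> real \<Rightarrow> real \<Rightarrow> real \<Rightarrow> real \<Rightarrow> real \<Rightarrow> real \<Rightarrow> real \<Rightarrow> real"
  where "robust_gain b eps1 eps2 mu nu P Q A w =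
    (let k1 = mu\<^sup>2 * P\<^sup>2 / (mu * P * A + eps1); k2 = nu * Q * A
     in k1 / b + k2\<^sup>2 * w\<^sup>2 / (b * (k2 * A * \<bar>w\<bar> + eps2)))"

lemma robust_gain_nonneg:
  assumes "0 < b" "0 < eps1" "0 < eps2" "0 \<le> mu" "0 \<le> nu" "0 \<le> P" "0 \<le> Q" "0 \<le> A"
  shows "0 \<le> robust_gain b eps1 eps2 mu nu P Q A w"
  using assms unfolding robust_gain_def Let_def by (simp add: add_nonneg_pos)

lemma robust_gain_mult_ge:
  assumes pos: "0 < b" "0 < eps1" "0 < eps2" "0 \<le> mu" "0 \<le> nu" "0 \<le> P" "0 \<le> Q" "0 \<le> A"
    and Ga: "b * A\<^sup>2 \<le> Ga"
  shows "mu * P * A + nu * Q * A\<^sup>2 * \<bar>w\<bar> - (eps1 + eps2) \<le> robust_gain b eps1 eps2 mu nu P Q A w * Ga"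
proof -
  define k1 where "k1 = mu\<^sup>2 * P\<^sup>2 / (mu * P * A + eps1)"
  define k2 where "k2 = nu * Q * A"
  define z1 where "z1 = mu * P * A"
  define z2 where "z2 = k2 * A * \<bar>w\<bar>"
  have "0 \<le> z1" "0 \<le> z2"
    using pos by (simp_all add: z1_def z2_def k2_def)
  have "z1 - eps1 + (z2 - eps2) \<le> z1\<^sup>2 / (z1 + eps1) + z2\<^sup>2 / (z2 + eps2)"
    using diff_le_square_div_add \<open>0 \<le> z1\<close> \<open>0 \<le> z2\<close> pos by (intro add_mono) auto
  also have "z1\<^sup>2 / (z1 + eps1) = k1 / b * (b * A\<^sup>2)"
    using pos by (simp add: k1_def z1_def power_mult_distrib)
  also have "z2\<^sup>2 / (z2 + eps2) = k2\<^sup>2 * w\<^sup>2 / (b * (k2 * A * \<bar>w\<bar> + eps2)) * (b * A\<^sup>2)"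
    using pos by (simp add: z2_def power_mult_distrib)
  also have "k1 / b * (b * A\<^sup>2) + k2\<^sup>2 * w\<^sup>2 / (b * (k2 * A * \<bar>w\<bar> + eps2)) * (b * A\<^sup>2)
      = robust_gain b eps1 eps2 mu nu P Q A w * (b * A\<^sup>2)"
    unfolding robust_gain_def Let_def k1_def k2_def by (simp add: distrib_right)
  also have "\<dots> \<le> robust_gain b eps1 eps2 mu nu P Q A w * Ga"
    using Ga robust_gain_nonneg[OF pos] by (rule mult_left_mono)
  finally show ?thesis
    by (simp add: z1_def z2_def k2_def power2_eq_square algebra_simps)
qed

lemma barrier_derivative_scalar_gt:
  fixes gam gth glam mu nu mb nb A P Q w Mv Mf Ft F0 Ga Ps r hx e :: real
  assumes pos: "0 < gam" "0 < gth" "0 < glam" "0 < mu"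
    and M: "Mf \<le> Mv" and F: "F0 - A * P * mb \<le> Ft" and G: "\<bar>Ga - Ps\<bar> \<le> A\<^sup>2 * Q * nb"
    and K: "0 \<le> Mf + F0 - e + gam * (hx - mb\<^sup>2 / (2 * gth) - nb\<^sup>2 / (2 * glam)) + Ps * w"
    and R: "mu * P * A + nu * Q * A\<^sup>2 * \<bar>w\<bar> - e \<le> r * Ga"
  shows "- gam * (hx - (mu - mb)\<^sup>2 / (2 * gth) - (nu - nb)\<^sup>2 / (2 * glam))
    < Mv + Ft + (w + r) * Ga - (mu - mb) * (- gam * mu + gth * A * P) / gth
        - (nu - nb) * (- gam * nu + glam * A\<^sup>2 * \<bar>w\<bar> * Q) / glam"
proof -
  have "\<bar>w\<bar> * \<bar>Ga - Ps\<bar> \<le> \<bar>w\<bar> * (A\<^sup>2 * Q * nb)"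
    using G by (rule mult_left_mono) simp
  then have "- (\<bar>w\<bar> * (A\<^sup>2 * Q * nb)) \<le> w * Ga - w * Ps"
    by (simp add: abs_mult[symmetric] abs_le_iff right_diff_distrib)
  then have wG: "Ps * w - \<bar>w\<bar> * (A\<^sup>2 * Q * nb) \<le> w * Ga"
    by (simp add: mult.commute)
  \<comment> \<open>completing the squares: (mu - mb) mu = ((mu - mb)^2 + mu^2 - mb^2) / 2\<close>
  have ident: "Mf + F0 + Ps * w - \<bar>w\<bar> * (A\<^sup>2 * Q * nb) - A * P * mb
        + mu * P * A + nu * Q * A\<^sup>2 * \<bar>w\<bar> - e
        - (mu - mb) * (- gam * mu + gth * A * P) / gth
        - (nu - nb) * (- gam * nu + glam * A\<^sup>2 * \<bar>w\<bar> * Q) / glam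
      = (Mf + F0 - e + gam * (hx - mb\<^sup>2 / (2 * gth) - nb\<^sup>2 / (2 * glam)) + Ps * w)
        - gam * (hx - (mu - mb)\<^sup>2 / (2 * gth) - (nu - nb)\<^sup>2 / (2 * glam))
        + gam * mu\<^sup>2 / (2 * gth) + gam * nu\<^sup>2 / (2 * glam)"
    using pos by (simp add: field_simps power2_eq_square)
  have "0 < gam * mu\<^sup>2 / (2 * gth)" "0 \<le> gam * nu\<^sup>2 / (2 * glam)"
    using pos by simp_all
  then show ?thesis
    using ident M F K R wG distrib_right[of w r Ga] by linarith
qed

lemma initial_barrier_nonneg:
  fixes h0 mu nu mb nb gth glam :: real
  assumes "0 < gth" "0 < glam" "0 \<le> mu" "0 \<le> nu" "0 \<le> mb" "0 \<le> nb"
    and init: "(mu\<^sup>2 + mb\<^sup>2) / (2 * gth) + (nu\<^sup>2 + nb\<^sup>2) / (2 * glam) \<le> h0"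
  shows "0 \<le> h0 - (mu - mb)\<^sup>2 / (2 * gth) - (nu - nb)\<^sup>2 / (2 * glam)"
proof -
  have "(mu - mb)\<^sup>2 \<le> mu\<^sup>2 + mb\<^sup>2" "(nu - nb)\<^sup>2 \<le> nu\<^sup>2 + nb\<^sup>2"
    using assms by (simp_all add: power2_diff)
  then have "(mu - mb)\<^sup>2 / (2 * gth) \<le> (mu\<^sup>2 + mb\<^sup>2) / (2 * gth)"
      "(nu - nb)\<^sup>2 / (2 * glam) \<le> (nu\<^sup>2 + nb\<^sup>2) / (2 * glam)"
    using assms by (simp_all add: divide_right_mono)
  with init show ?thesis
    by linarith
qed

lemma closed_loop_barrier_derivative_gt:
  fixes iota :: "'n::finite \<Rightarrow> 's::finite" and x :: "real^'s" and Dh :: "real^'s \<Rightarrow> real^'s"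
    and g :: "real^'s \<Rightarrow> real^'n^'n"
    and p :: "'n \<Rightarrow> nat" and phi :: "'n \<Rightarrow> real^'s \<Rightarrow> nat \<Rightarrow> real"
    and q :: "'n \<Rightarrow> 'n \<Rightarrow> nat" and psi :: "'n \<Rightarrow> 'n \<Rightarrow> real^'s \<Rightarrow> nat \<Rightarrow> real"
    and thlo thhi th0 :: "'n \<Rightarrow> nat \<Rightarrow> real" and lam lamlo lamhi lam0 :: "'n \<Rightarrow> 'n \<Rightarrow> nat \<Rightarrow> real"
  defines "a \<equiv> proj2 iota (Dh x)" and "P \<equiv> norm_stack1 p phi x" and "Q \<equiv> norm_stack2 q psi x"
    and "G \<equiv> g x + mat_param q lam psi x"
    and "mb \<equiv> radius1 p thlo thhi th0" and "nb \<equiv> radius2 q lamlo lamhi lam0"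
  assumes fu: "\<And>j. fulo x $ j \<le> fu x $ j \<and> fu x $ j \<le> fuhi x $ j"
    and th: "\<And>i j. j < p i \<Longrightarrow> thlo i j \<le> th i j \<and> th i j \<le> thhi i j"
    and lam: "\<And>i j k. k < q i j \<Longrightarrow> lamlo i j k \<le> lam i j k \<and> lam i j k \<le> lamhi i j k"
    and th0: "\<And>i j. j < p i \<Longrightarrow> thlo i j \<le> th0 i j \<and> th0 i j \<le> thhi i j"
    and lam0: "\<And>i j k. k < q i j \<Longrightarrow> lamlo i j k \<le> lam0 i j k \<and> lam0 i j k \<le> lamhi i j k"
    and G_pd: "pos_def_mat ((1/2) *\<^sub>R (G + transpose G))"
    and G_sv: "bstar \<le> smallest_sv ((1/2) *\<^sub>R (G + transpose G))"
    and pos: "0 < bstar" "0 < gam" "0 < eps1" "0 < eps2" "0 < gth" "0 < glam" "0 < mu" "0 < nu"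
    and K: "0 \<le> Mfun Dh f fulo fuhi x + a \<bullet> lin_param p th0 phi x - (eps1 + eps2)
      + gam * (h x - mb\<^sup>2 / (2 * gth) - nb\<^sup>2 / (2 * glam))
      + (a \<bullet> ((g x + mat_param q lam0 psi x) *v a)) * w"
  shows "- gam * (h x - (mu - mb)\<^sup>2 / (2 * gth) - (nu - nb)\<^sup>2 / (2 * glam))
    < Dh x \<bullet> (f x + fu x + emb iota (lin_param p th phi x
          + G *v ((w + robust_gain bstar eps1 eps2 mu nu P Q (norm a) w) *\<^sub>R a)))
      - (mu - mb) * (- gam * mu + gth * norm a * P) / gth
      - (nu - nb) * (- gam * nu + glam * (norm a)\<^sup>2 * \<bar>w\<bar> * Q) / glam"
proof -
  let ?r = "robust_gain bstar eps1 eps2 mu nu P Q (norm a) w"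
  have split: "Dh x \<bullet> (f x + fu x + emb iota (lin_param p th phi x + G *v ((w + ?r) *\<^sub>R a)))
      = Dh x \<bullet> (f x + fu x) + a \<bullet> lin_param p th phi x + (w + ?r) * (a \<bullet> (G *v a))"
    by (simp add: a_def inner_add_right inner_emb matrix_vector_mult_scaleR)
  have "\<bar>a \<bullet> lin_param p th phi x - a \<bullet> lin_param p th0 phi x\<bar> \<le> norm a * P * mb"
    unfolding P_def mb_def using th th0 by (rule abs_inner_lin_param_diff_le)
  then have F: "a \<bullet> lin_param p th0 phi x - norm a * P * mb \<le> a \<bullet> lin_param p th phi x"
    by linarith
  have "a \<bullet> (G *v a) - a \<bullet> ((g x + mat_param q lam0 psi x) *v a)
      = a \<bullet> (mat_param q lam psi x *v a) - a \<bullet> (mat_param q lam0 psi x *v a)"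
    by (simp add: G_def matrix_vector_mult_add_rdistrib inner_add_right)
  also have "\<bar>\<dots>\<bar> \<le> (norm a)\<^sup>2 * Q * nb"
    unfolding Q_def nb_def using lam lam0 by (rule abs_quadratic_form_mat_param_diff_le)
  finally have Ga: "\<bar>a \<bullet> (G *v a) - a \<bullet> ((g x + mat_param q lam0 psi x) *v a)\<bar> \<le> (norm a)\<^sup>2 * Q * nb" .
  have "0 \<le> P" "0 \<le> Q"
    by (simp_all add: P_def Q_def)
  then have R: "mu * P * norm a + nu * Q * (norm a)\<^sup>2 * \<bar>w\<bar> - (eps1 + eps2) \<le> ?r * (a \<bullet> (G *v a))"
    using pos quadratic_form_ge_symmetric_part[OF G_pd G_sv]
    by (intro robust_gain_mult_ge) simp_all
  have M: "Mfun Dh f fulo fuhi x \<le> Dh x \<bullet> (f x + fu x)"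
    using fu by (rule Mfun_le_inner)
  show ?thesis
    unfolding split
    by (rule barrier_derivative_scalar_gt[OF pos(2) pos(5) pos(6) pos(7) M F Ga K R])
qed

lemma has_real_derivative_exp_scaled:
  assumes "(y has_real_derivative y') (at t within S)"
  shows "((\<lambda>s. exp (gam * s) * y s) has_real_derivative exp (gam * t) * (y' + gam * y t))
    (at t within S)"
  using assms by (auto intro!: derivative_eq_intros simp: algebra_simps)

lemma pos_if_deriv_ge_neg_linear:
  fixes y y' :: "real \<Rightarrow> real"
  assumes deriv: "\<And>s. s \<in> {0..<T} \<Longrightarrow> (y has_real_derivative y' s) (at s within {0..<T})"
    and ge: "\<And>s. s \<in> {0..<T} \<Longrightarrow> - gam * y s \<le> y' s"
    and "0 < y 0" and t: "t \<in> {0..<T}"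
  shows "0 < y t"
proof -
  define W where "W s = exp (gam * s) * y s" for s
  have dW: "(W has_real_derivative exp (gam * s) * (y' s + gam * y s)) (at s within {0..<T})"
    if "s \<in> {0..<T}" for s
    unfolding W_def using deriv[OF that] by (rule has_real_derivative_exp_scaled)
  have "W 0 \<le> W t"
  proof (rule DERIV_nonneg_imp_increasing_open[of 0 t W])
    fix s assume s: "0 < s" "s < t"
    then have sT: "s \<in> {0..<T}"
      using t by auto
    have "at s within {0..<T} = at s"
      using s t by (intro at_within_interior) auto
    moreover have "0 \<le> exp (gam * s) * (y' s + gam * y s)"
      using ge[OF sT] by simp
    ultimately show "\<exists>d. (W has_real_derivative d) (at s) \<and> 0 \<le> d"
      using dW[OF sT] by auto
  next
    show "continuous_on {0..t} W"
      using t by (intro DERIV_continuous_on[of _ _ "\<lambda>s. exp (gam * s) * (y' s + gam * y s)"])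
        (auto intro: has_field_derivative_subset[OF dW])
  qed (use t in simp)
  then have "0 < exp (gam * t) * y t"
    using \<open>0 < y 0\<close> by (simp add: W_def)
  then show ?thesis
    by (simp add: zero_less_mult_iff)
qed

lemma last_nonneg_point:
  fixes B :: "real \<Rightarrow> real"
  assumes "0 \<le> t" and "continuous_on {0..t} B" and "0 \<le> B 0" and "B t < 0"
  obtains t0 where "0 \<le> t0" "t0 < t" "0 \<le> B t0" "\<And>s. t0 < s \<Longrightarrow> s \<le> t \<Longrightarrow> B s < 0"
proof -
  define S where "S = {s \<in> {0..t}. 0 \<le> B s}"
  have "S \<noteq> {}" and bdd: "bdd_above S"
    using assms(1,3) by (auto simp: S_def intro!: bdd_aboveI[of _ t] exI[of _ 0])
  moreover have "closed S"
    unfolding S_def using assms(2) by (intro continuous_on_closed_Collect_le) auto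
  ultimately have "Sup S \<in> S"
    by (rule closed_contains_Sup)
  moreover have "B s < 0" if "Sup S < s" "s \<le> t" for s
  proof (rule ccontr)
    assume "\<not> B s < 0"
    then have "s \<in> S"
      using \<open>Sup S \<in> S\<close> that by (auto simp: S_def)
    then have "s \<le> Sup S"
      using bdd by (rule cSup_upper)
    with that show False
      by simp
  qed
  ultimately show thesis
    using assms(4) by (intro that[of "Sup S"]) (auto simp: S_def order.order_iff_strict)
qed

lemma nonneg_if_deriv_gt_neg_linear_at_nonneg:
  fixes B B' :: "real \<Rightarrow> real"
  assumes deriv: "\<And>s. s \<in> {0..<T} \<Longrightarrow> (B has_real_derivative B' s) (at s within {0..<T})"
    and gt: "\<And>s. s \<in> {0..<T} \<Longrightarrow> 0 \<le> B s \<Longrightarrow> - gam * B s < B' s"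
    and "0 \<le> B 0" and t: "t \<in> {0..<T}"
  shows "0 \<le> B t"
proof (rule ccontr)
  assume "\<not> 0 \<le> B t"
  moreover have "continuous_on {0..t} B"
    using t by (intro continuous_on_subset[OF DERIV_continuous_on[OF deriv]]) auto
  ultimately obtain t0 where t0: "0 \<le> t0" "t0 < t" "0 \<le> B t0"
    and neg: "\<And>s. t0 < s \<Longrightarrow> s \<le> t \<Longrightarrow> B s < 0"
    using last_nonneg_point \<open>0 \<le> B 0\<close> t by (metis atLeastLessThan_iff not_le)
  then have t0T: "t0 \<in> {0..<T}"
    using t by auto
  have "0 < exp (gam * t0) * (B' t0 + gam * B t0)"
    using gt[OF t0T t0(3)] by simp
  then obtain d where "0 < d" and inc: "\<And>h. 0 < h \<Longrightarrow> t0 + h \<in> {0..<T} \<Longrightarrow> h < d \<Longrightarrow>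
      exp (gam * t0) * B t0 < exp (gam * (t0 + h)) * B (t0 + h)"
    using has_real_derivative_pos_inc_right[OF has_real_derivative_exp_scaled[OF deriv[OF t0T]]]
    by blast
  define h where "h = min (d / 2) (t - t0)"
  have h: "0 < h" "h < d" "t0 + h \<le> t"
    using \<open>0 < d\<close> t0 by (auto simp: h_def)
  then have "exp (gam * t0) * B t0 < exp (gam * (t0 + h)) * B (t0 + h)"
    using inc t t0 by auto
  moreover have "0 \<le> exp (gam * t0) * B t0"
    using t0(3) by simp
  ultimately have "0 < exp (gam * (t0 + h)) * B (t0 + h)"
    by linarith
  with neg[of "t0 + h"] h show False
    by (simp add: zero_less_mult_iff)
qed

lemma has_real_derivative_comp_gradient:
  assumes "(h has_derivative (\<lambda>v. d \<bullet> v)) (at (x t))"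
    and "(x has_vector_derivative v) (at t within S)"
  shows "((\<lambda>s. h (x s)) has_real_derivative d \<bullet> v) (at t within S)"
proof -
  have "((h \<circ> x) has_derivative ((\<lambda>w. d \<bullet> w) \<circ> (\<lambda>s. s *\<^sub>R v))) (at t within S)"
    using assms(2) unfolding has_vector_derivative_def
    by (rule diff_chain_within) (rule has_derivative_at_withinI[OF assms(1)])
  moreover have "(\<lambda>w. d \<bullet> w) \<circ> (\<lambda>s. s *\<^sub>R v) = (*) (d \<bullet> v)"
    by (simp add: fun_eq_iff mult.commute)
  ultimately show ?thesis
    unfolding has_field_derivative_def o_def by simp
qed

theorem theorem2:
  fixes iota :: "'n::finite \<Rightarrow> 's::finite"
    and f fu fulo fuhi :: "real^'s \<Rightarrow> real^'s"
    and p :: "'n \<Rightarrow> nat" and phi :: "'n \<Rightarrow> real^'s \<Rightarrow> nat \<Rightarrow> real"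
    and th thlo thhi th0 :: "'n \<Rightarrow> nat \<Rightarrow> real"
    and g :: "real^'s \<Rightarrow> real^'n^'n"
    and q :: "'n \<Rightarrow> 'n \<Rightarrow> nat" and psi :: "'n \<Rightarrow> 'n \<Rightarrow> real^'s \<Rightarrow> nat \<Rightarrow> real"
    and lam lamlo lamhi lam0 :: "'n \<Rightarrow> 'n \<Rightarrow> nat \<Rightarrow> real"
    and h :: "real^'s \<Rightarrow> real" and Dh :: "real^'s \<Rightarrow> real^'s"
    and X :: "(real^'s) set" and bstar :: real
    and gam eps1 eps2 gth glam :: real
    and u0 :: "real^'s \<Rightarrow> real"
    and T :: real and xt :: "real \<Rightarrow> real^'s" and muh nuh :: "real \<Rightarrow> real"
  assumes iota_inj: "inj iota"
    (* known/unknown drift terms are Lipschitz *)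
    and f_lip: "\<exists>L. L-lipschitz_on UNIV f"
    and fu_lip: "\<exists>L. L-lipschitz_on UNIV fu"
    (* h is continuously differentiable with gradient (row vector) Dh *)
    and h_deriv: "\<And>x. (h has_derivative (\<lambda>v. Dh x \<bullet> v)) (at x)"
    and Dh_cont: "continuous_on UNIV Dh"
    (* Assumption A *)
    and assmA: "\<And>x j. fulo x $ j \<le> fu x $ j \<and> fu x $ j \<le> fuhi x $ j"
    (* Assumption B' *)
    and assmB_th: "\<And>i j. j < p i \<Longrightarrow> thlo i j \<le> th i j \<and> th i j \<le> thhi i j"
    and assmB_lam: "\<And>i j k. k < q i j \<Longrightarrow> lamlo i j k \<le> lam i j k \<and> lam i j k \<le> lamhi i j k"
    (* nominal values *)
    and nom_th: "\<And>i j. j < p i \<Longrightarrow> thlo i j \<le> th0 i j \<and> th0 i j \<le> thhi i j"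
    and nom_lam: "\<And>i j k. k < q i j \<Longrightarrow> lamlo i j k \<le> lam0 i j k \<and> lam0 i j k \<le> lamhi i j k"
    (* Assumption C' *)
    and X_compact: "compact X"
    and C_sub_X: "{x. h x \<ge> 0} \<subseteq> X"
    and bstar_pos: "bstar > 0"
    and assmC: "\<And>x. x \<in> X \<Longrightarrow>
       pos_def_mat ((1/2) *\<^sub>R ((g x + mat_param q lam psi x) + transpose (g x + mat_param q lam psi x)))
       \<and> smallest_sv ((1/2) *\<^sub>R ((g x + mat_param q lam psi x) + transpose (g x + mat_param q lam psi x))) \<ge> bstar"
    (* (ii) constants and nonemptiness of K_BF^g(x) on C *)
    and pos: "gam > 0" "eps1 > 0" "eps2 > 0" "gth > 0" "glam > 0"
    and K_nonempty: "\<And>x. h x \<ge> 0 \<Longrightarrow>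
       {uu::real. Mfun Dh f fulo fuhi x + proj2 iota (Dh x) \<bullet> lin_param p th0 phi x - (eps1 + eps2)
          + gam * (h x - (radius1 p thlo thhi th0)\<^sup>2 / (2 * gth) - (radius2 q lamlo lamhi lam0)\<^sup>2 / (2 * glam))
          + (proj2 iota (Dh x) \<bullet> ((g x + mat_param q lam0 psi x) *v proj2 iota (Dh x))) * uu \<ge> 0} \<noteq> {}"
    (* (iii) u0 Lipschitz with u0(x) in K_BF^g(x) *)
    and u0_lip: "\<exists>L. L-lipschitz_on UNIV u0"
    and u0_K: "\<And>x. h x \<ge> 0 \<Longrightarrow>
       Mfun Dh f fulo fuhi x + proj2 iota (Dh x) \<bullet> lin_param p th0 phi x - (eps1 + eps2)
          + gam * (h x - (radius1 p thlo thhi th0)\<^sup>2 / (2 * gth) - (radius2 q lamlo lamhi lam0)\<^sup>2 / (2 * glam))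
          + (proj2 iota (Dh x) \<bullet> ((g x + mat_param q lam0 psi x) *v proj2 iota (Dh x))) * u0 x \<ge> 0"
    (* closed-loop trajectory on [0,T) *)
    and T_pos: "T > 0"
    and mu_ode: "\<And>t. t \<in> {0..<T} \<Longrightarrow>
       (muh has_real_derivative
          (- gam * muh t + gth * norm (proj2 iota (Dh (xt t))) * norm_stack1 p phi (xt t)))
        (at t within {0..<T})"
    and nu_ode: "\<And>t. t \<in> {0..<T} \<Longrightarrow>
       (nuh has_real_derivative
          (- gam * nuh t + glam * (norm (proj2 iota (Dh (xt t))))\<^sup>2 * \<bar>u0 (xt t)\<bar> * norm_stack2 q psi (xt t)))
        (at t within {0..<T})"
    and mu0: "muh 0 > 0" and nu0: "nuh 0 > 0"
    and x_ode: "\<And>t. t \<in> {0..<T} \<Longrightarrow>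
       (let x = xt t; hx2 = proj2 iota (Dh x); w = u0 x;
            k1 = (muh t)\<^sup>2 * (norm_stack1 p phi x)\<^sup>2
                 / (muh t * norm_stack1 p phi x * norm hx2 + eps1);
            k2 = nuh t * norm_stack2 q psi x * norm hx2;
            s = w + k1 / bstar + k2\<^sup>2 * w\<^sup>2 / (bstar * (k2 * norm hx2 * \<bar>w\<bar> + eps2));
            u = s *\<^sub>R hx2
        in (xt has_vector_derivative
              (f x + fu x + emb iota (lin_param p th phi x + (g x + mat_param q lam psi x) *v u)))
             (at t within {0..<T}))"
    (* (iv) initial condition *)
    and init: "h (xt 0) \<ge> ((muh 0)\<^sup>2 + (radius1 p thlo thhi th0)\<^sup>2) / (2 * gth)
                         + ((nuh 0)\<^sup>2 + (radius2 q lamlo lamhi lam0)\<^sup>2) / (2 * glam)"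
  shows "\<forall>t\<in>{0<..<T}. h (xt t) \<ge> 0"
proof -
  define mb where "mb = radius1 p thlo thhi th0"
  define nb where "nb = radius2 q lamlo lamhi lam0"
  define a where "a t = proj2 iota (Dh (xt t))" for t
  define V where "V t = f (xt t) + fu (xt t) + emb iota (lin_param p th phi (xt t)
      + (g (xt t) + mat_param q lam psi (xt t)) *v ((u0 (xt t) + robust_gain bstar eps1 eps2
          (muh t) (nuh t) (norm_stack1 p phi (xt t)) (norm_stack2 q psi (xt t)) (norm (a t))
          (u0 (xt t))) *\<^sub>R a t))" for t
  define B where "B t = h (xt t) - (muh t - mb)\<^sup>2 / (2 * gth) - (nuh t - nb)\<^sup>2 / (2 * glam)" for t
  define B' where "B' t = Dh (xt t) \<bullet> V t
      - (muh t - mb) * (- gam * muh t + gth * norm (a t) * norm_stack1 p phi (xt t)) / gth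
      - (nuh t - nb) * (- gam * nuh t
          + glam * (norm (a t))\<^sup>2 * \<bar>u0 (xt t)\<bar> * norm_stack2 q psi (xt t)) / glam" for t
  have h_ge_B: "B t \<le> h (xt t)" for t
  proof -
    have "0 \<le> (muh t - mb)\<^sup>2 / (2 * gth)" "0 \<le> (nuh t - nb)\<^sup>2 / (2 * glam)"
      using pos by simp_all
    then show ?thesis
      by (simp add: B_def)
  qed
  have B_deriv: "(B has_real_derivative B' t) (at t within {0..<T})" if t: "t \<in> {0..<T}" for t
  proof -
    have "(xt has_vector_derivative V t) (at t within {0..<T})"
      using x_ode[OF t] by (simp add: V_def a_def robust_gain_def Let_def add.assoc)
    then show ?thesis
      unfolding B_def B'_def a_def using pos
      by (auto intro!: derivative_eq_intros has_real_derivative_comp_gradient[OF h_deriv]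
          mu_ode[OF t] nu_ode[OF t] simp: field_simps)
  qed
  have B'_gt: "- gam * B t < B' t" if t: "t \<in> {0..<T}" and "0 \<le> B t" for t
  proof -
    have h_nonneg: "0 \<le> h (xt t)"
      using h_ge_B[of t] \<open>0 \<le> B t\<close> by linarith
    then have C: "xt t \<in> X"
      using C_sub_X by auto
    have "0 < muh t" "0 < nuh t"
      using pos_if_deriv_ge_neg_linear[where gam = gam, OF mu_ode _ mu0 t]
        pos_if_deriv_ge_neg_linear[where gam = gam, OF nu_ode _ nu0 t] pos by simp_all
    then show ?thesis
      unfolding B_def B'_def V_def a_def mb_def nb_def
      by (intro closed_loop_barrier_derivative_gt[where x = "xt t" and f = f and fu = fu
            and fulo = fulo and fuhi = fuhi and g = g and Dh = Dh and h = h,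
            OF assmA assmB_th assmB_lam nom_th nom_lam conjunct1[OF assmC[OF C]]
            conjunct2[OF assmC[OF C]] bstar_pos pos _ _ u0_K[OF h_nonneg]])
        simp_all
  qed
  have "0 \<le> B 0"
    unfolding B_def mb_def nb_def using pos mu0 nu0 init
    by (intro initial_barrier_nonneg) simp_all
  show ?thesis
  proof
    fix t assume "t \<in> {0<..<T}"
    then have "0 \<le> B t"
      using nonneg_if_deriv_gt_neg_linear_at_nonneg[OF B_deriv B'_gt \<open>0 \<le> B 0\<close>] by simp
    with h_ge_B[of t] show "0 \<le> h (xt t)"
      by linarith
  qed
qed

end
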